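(* Fix integers $k_1,k_2$ with $-1\le k_1\le k_2$ and an integer $m\ge 2k_1+2$. For $(x_1,\ldots,x_{m-1})\in\mathbb{Z}_{\ge0}^{m-1}$ let $\overline{x}=(x_1,\ldots,x_{2k_1+1})$. There is a bijection between the set of numerical semigroups $S$ with $m(S)=m$, $g(S)=m+k_1$ and $e(S)=g(S)-k_2$, and the set of sequences $(x_1,\ldots,x_{m-1})$ satisfying: (1) $x_1,\ldots,x_{m-1}\in\{1,2,3\}$; (2) if $i\ge 2k_1$, then $x_i\in\{1,2\}$; (3) whenever $i_1,i_2,i_3\in[1,2k_1+1]$ satisfy $i_1+i_2=i_3$, we have $(x_{i_1},x_{i_2},x_{i_3})\neq(1,1,3)$; (4) $\#\{i\in[2k_1+2,m-1]\mid x_i=2\}=k_1+1-a(\overline{x})-2b(\overline{x})$; (5) $a(\overline{x})+b(\overline{x})-c(\overline{x})=2k_1+1-k_2$.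
   Context: A numerical semigroup $S$ is a submonoid of $\mathbb{N}_0$ with finite complement; $g(S)$ is the size of the complement (genus), $m(S)$ the smallest nonzero element (multiplicity), and $e(S)$ the size of the minimal generating set $(S\setminus\{0\})\setminus((S\setminus\{0\})+(S\setminus\{0\}))$ (embedding dimension). For a tuple $\overline{x}=(x_1,\ldots,x_t)\in\{1,2,3\}^t$ define $a(\overline{x})=\#\{i\in[1,t]: x_i=2\}$, $b(\overline{x})=\#\{i\in[1,t]: x_i=3\}$, and $c(\overline{x})=\#\{i\in[1,t]: \exists j_1,j_2\in[1,t] \text{ with } j_1+j_2=i \text{ and } (x_{j_1},x_{j_2},x_i)=(1,1,2)\}$. *)

theory Defs
  imports Main
begin

definition numerical_semigroup :: "nat set \<Rightarrow> bool" where
  "numerical_semigroup S \<longleftrightarrow> 0 \<in> S \<and> (\<forall>x\<in>S. \<forall>y\<in>S. x + y \<in> S) \<and> finite (UNIV - S)"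

definition multiplicity :: "nat set \<Rightarrow> nat" where
  "multiplicity S = (LEAST x. x \<in> S \<and> x \<noteq> 0)"

definition genus :: "nat set \<Rightarrow> nat" where
  "genus S = card (UNIV - S)"

definition min_generators :: "nat set \<Rightarrow> nat set" where
  "min_generators S = (S - {0}) - {x + y | x y. x \<in> S - {0} \<and> y \<in> S - {0}}"

definition embedding_dimension :: "nat set \<Rightarrow> nat" where
  "embedding_dimension S = card (min_generators S)"

text \<open>Tuples (x_1,...,x_t) are lists xs with x_i = xs ! (i - 1).\<close>
definition cnt_a :: "nat list \<Rightarrow> nat" where
  "cnt_a xs = card {i \<in> {1..length xs}. xs ! (i - 1) = 2}"

definition cnt_b :: "nat list \<Rightarrow> nat" where
  "cnt_b xs = card {i \<in> {1..length xs}. xs ! (i - 1) = 3}"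

definition cnt_c :: "nat list \<Rightarrow> nat" where
  "cnt_c xs = card {i \<in> {1..length xs}. \<exists>j1\<in>{1..length xs}. \<exists>j2\<in>{1..length xs}.
      j1 + j2 = i \<and> xs ! (j1 - 1) = 1 \<and> xs ! (j2 - 1) = 1 \<and> xs ! (i - 1) = 2}"

definition good_seq :: "int \<Rightarrow> int \<Rightarrow> int \<Rightarrow> nat list \<Rightarrow> bool" where
  "good_seq k1 k2 m xs \<longleftrightarrow>
     int (length xs) = m - 1 \<and>
     (\<forall>i\<in>{1..length xs}. xs ! (i - 1) \<in> {1, 2, 3}) \<and>
     (\<forall>i\<in>{1..length xs}. int i \<ge> 2 * k1 \<longrightarrow> xs ! (i - 1) \<in> {1, 2}) \<and>
     (\<forall>i1\<in>{1..length xs}. \<forall>i2\<in>{1..length xs}. \<forall>i3\<in>{1..length xs}.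
        int i1 \<le> 2 * k1 + 1 \<and> int i2 \<le> 2 * k1 + 1 \<and> int i3 \<le> 2 * k1 + 1 \<and> i1 + i2 = i3
        \<longrightarrow> (xs ! (i1 - 1), xs ! (i2 - 1), xs ! (i3 - 1)) \<noteq> (1, 1, 3)) \<and>
     (let xbar = take (nat (2 * k1 + 1)) xs in
        int (card {i \<in> {1..length xs}. 2 * k1 + 2 \<le> int i \<and> int i \<le> m - 1 \<and> xs ! (i - 1) = 2})
          = k1 + 1 - int (cnt_a xbar) - 2 * int (cnt_b xbar) \<and>
        int (cnt_a xbar) + int (cnt_b xbar) - int (cnt_c xbar) = 2 * k1 + 1 - k2)"

end

theory Submission
  imports Defs
begin

text \<open>
  A numerical semigroup S of multiplicity M is determined by its Kunz coordinates: for
  0 < r < M, the least element of S congruent to r modulo M is K r * M + r. S is closed under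
  addition iff K satisfies the Kunz inequalities, the genus of S is the sum of the K r, and the
  minimal generators of S are M together with those K r * M + r that are not sums of two nonzero
  elements of S; call such r decomposable. Hence e(S) = M minus the number of decomposable r.

  Genus M + k1 means that the excess n = sum of (K r - 1) equals k1 + 1, and m >= 2 k1 + 2 means
  2n <= M. Pairing j with r - j below r, and with M + r - j above r, each pair contributes at
  least one to the excess unless both coordinates are 1. By the Kunz inequalities this forces
  K r <= 3, K r = 3 only for r + 2 < 2n, every r with K r = 3 decomposable, and every r >= 2n
  with K r = 2 a sum of two positions of coordinate 1. Reading x_i = K i, condition (4) is then
  the excess identity and condition (5) the count of decomposable positions, and conversely
  conditions (1)-(5) give back the Kunz inequalities.
\<close>

lemma numerical_semigroup_add_mult:
  assumes "numerical_semigroup S" "x \<in> S" "y \<in> S"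
  shows "x + q * y \<in> S"
proof (induction q)
  case 0
  then show ?case using assms(2) by simp
next
  case (Suc q)
  have "(x + q * y) + y \<in> S"
    using assms(1) Suc assms(3) unfolding numerical_semigroup_def by blast
  then show ?case by (simp add: ac_simps)
qed

lemma numerical_semigroup_eventually_mem:
  assumes "numerical_semigroup S"
  obtains N where "\<And>x. N \<le> x \<Longrightarrow> x \<in> S"
proof -
  have "finite (UNIV - S)" using assms unfolding numerical_semigroup_def by blast
  then obtain N where "\<forall>x\<in>UNIV - S. x < N" by (auto simp: finite_nat_set_iff_bounded)
  then show thesis using that[of N] by (meson DiffI UNIV_I not_le)
qed

lemma multiplicity_le: "x \<in> S \<Longrightarrow> x \<noteq> 0 \<Longrightarrow> multiplicity S \<le> x"
  unfolding multiplicity_def by (rule Least_le) simp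

lemma multiplicity_mem:
  assumes "numerical_semigroup S"
  shows "multiplicity S \<in> S" "0 < multiplicity S"
proof -
  obtain N where "\<And>x. N \<le> x \<Longrightarrow> x \<in> S"
    using numerical_semigroup_eventually_mem[OF assms] by blast
  then have "Suc N \<in> S \<and> Suc N \<noteq> 0" by simp
  then have "multiplicity S \<in> S \<and> multiplicity S \<noteq> 0"
    unfolding multiplicity_def by (rule LeastI)
  then show "multiplicity S \<in> S" "0 < multiplicity S" by auto
qed

lemma mult_add_add_mult_add:
  fixes M :: nat
  shows "i + j < M \<Longrightarrow> (a * M + i) + (b * M + j) = (a + b) * M + (i + j)"
    and "M \<le> i + j \<Longrightarrow> (a * M + i) + (b * M + j) = (a + b + 1) * M + (i + j - M)"
  by (simp_all add: algebra_simps)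

lemma mult_add_eq_mult_add_iff:
  fixes M :: nat
  assumes "i < M" "j < M"
  shows "a * M + i = b * M + j \<longleftrightarrow> a = b \<and> i = j"
proof
  assume "a * M + i = b * M + j"
  then have "(a * M + i) div M = (b * M + j) div M" "(a * M + i) mod M = (b * M + j) mod M"
    by simp_all
  then show "a = b \<and> i = j" using assms by simp
qed simp

section \<open>Kunz coordinates\<close>

text \<open>
  For M in S the numbers kunz_coord M S r * M + r, r < M, form the Apery set of S with
  respect to M.
\<close>

definition kunz_set :: "nat \<Rightarrow> (nat \<Rightarrow> nat) \<Rightarrow> nat set" where
  "kunz_set M K = {x. x mod M = 0 \<or> K (x mod M) \<le> x div M}"

definition kunz_coord :: "nat \<Rightarrow> nat set \<Rightarrow> nat \<Rightarrow> nat" where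
  "kunz_coord M S r = (LEAST q. q * M + r \<in> S)"

lemma mem_kunz_set: "r < M \<Longrightarrow> q * M + r \<in> kunz_set M K \<longleftrightarrow> r = 0 \<or> K r \<le> q"
  by (simp add: kunz_set_def)

lemma kunz_set_elim:
  assumes "0 < M" "x \<in> kunz_set M K"
  obtains q r where "x = q * M + r" "r < M" "r = 0 \<or> K r \<le> q"
  using assms by (intro that[of "x div M" "x mod M"]) (auto simp: kunz_set_def)

lemma kunz_set_cong:
  assumes "0 < M" and "\<And>r. r \<in> {1..<M} \<Longrightarrow> K r = K' r"
  shows "kunz_set M K = kunz_set M K'"
proof -
  have "x mod M \<noteq> 0 \<Longrightarrow> K (x mod M) = K' (x mod M)" for x
    using assms by simp
  then show ?thesis unfolding kunz_set_def by (metis (no_types, lifting))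
qed

lemma kunz_coord_kunz_set:
  assumes "r < M"
  shows "kunz_coord M (kunz_set M K) r = (if r = 0 then 0 else K r)"
  unfolding kunz_coord_def mem_kunz_set[OF assms]
  by (rule Least_equality) auto

lemma kunz_coord_mem:
  assumes "numerical_semigroup S" "0 < M"
  shows "kunz_coord M S r * M + r \<in> S"
proof -
  obtain N where "\<And>x. N \<le> x \<Longrightarrow> x \<in> S"
    using numerical_semigroup_eventually_mem[OF assms(1)] by blast
  moreover have "N \<le> N * M + r" using assms(2) by (cases M) auto
  ultimately have "N * M + r \<in> S" by blast
  then show ?thesis unfolding kunz_coord_def by (rule LeastI)
qed

lemma kunz_set_kunz_coord:
  assumes S: "numerical_semigroup S" and "M \<in> S" "0 < M"
  shows "kunz_set M (kunz_coord M S) = S"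
proof (intro set_eqI)
  fix x
  define q r where "q = x div M" and "r = x mod M"
  have x: "x = q * M + r" and r: "r < M" using \<open>0 < M\<close> by (simp_all add: q_def r_def)
  show "x \<in> kunz_set M (kunz_coord M S) \<longleftrightarrow> x \<in> S"
  proof (cases "r = 0")
    case True
    have "0 \<in> S" using S unfolding numerical_semigroup_def by blast
    then have "x \<in> S" using numerical_semigroup_add_mult[OF S _ \<open>M \<in> S\<close>, of 0 q] True x by simp
    then show ?thesis using True unfolding kunz_set_def r_def by simp
  next
    case False
    have "x \<in> S" if "kunz_coord M S r \<le> q"
    proof -
      have "(kunz_coord M S r * M + r) + (q - kunz_coord M S r) * M \<in> S"
        using numerical_semigroup_add_mult[OF S kunz_coord_mem[OF S \<open>0 < M\<close>] \<open>M \<in> S\<close>] .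
      also have "(kunz_coord M S r * M + r) + (q - kunz_coord M S r) * M = x"
        using that by (simp add: x algebra_simps flip: add_mult_distrib)
      finally show ?thesis .
    qed
    moreover have "kunz_coord M S r \<le> q" if "x \<in> S"
      unfolding kunz_coord_def by (rule Least_le) (use that x in simp)
    ultimately show ?thesis using False by (auto simp: x mem_kunz_set[OF r])
  qed
qed

definition kunz_admissible :: "nat \<Rightarrow> (nat \<Rightarrow> nat) \<Rightarrow> bool" where
  "kunz_admissible M K \<longleftrightarrow>
     (\<forall>i\<in>{1..<M}. \<forall>j\<in>{1..<M}. i + j < M \<longrightarrow> K (i + j) \<le> K i + K j) \<and>
     (\<forall>i\<in>{1..<M}. \<forall>j\<in>{1..<M}. M < i + j \<longrightarrow> K (i + j - M) \<le> K i + K j + 1)"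

lemma kunz_admissibleD:
  assumes "kunz_admissible M K" "0 < i" "0 < j"
  shows "i + j < M \<Longrightarrow> K (i + j) \<le> K i + K j"
    and "i < M \<Longrightarrow> j < M \<Longrightarrow> M < i + j \<Longrightarrow> K (i + j - M) \<le> K i + K j + 1"
  using assms unfolding kunz_admissible_def by auto

lemma kunz_set_complement:
  assumes "0 < M"
  shows "UNIV - kunz_set M K = (\<lambda>(r, q). q * M + r) ` (SIGMA r:{1..<M}. {..<K r})"
proof (intro set_eqI iffI)
  fix x assume "x \<in> UNIV - kunz_set M K"
  then have "(x mod M, x div M) \<in> (SIGMA r:{1..<M}. {..<K r})"
    using assms by (auto simp: kunz_set_def)
  moreover have "x = (\<lambda>(r, q). q * M + r) (x mod M, x div M)" by simp
  ultimately show "x \<in> (\<lambda>(r, q). q * M + r) ` (SIGMA r:{1..<M}. {..<K r})" by blast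
qed (auto simp: mem_kunz_set)

lemma genus_kunz_set:
  assumes "0 < M"
  shows "genus (kunz_set M K) = sum K {1..<M}" and "finite (UNIV - kunz_set M K)"
proof -
  have "inj_on (\<lambda>(r, q). q * M + r) (SIGMA r:{1..<M}. {..<K r})"
    by (rule inj_onI) (auto simp: mult_add_eq_mult_add_iff)
  then have "genus (kunz_set M K) = card (SIGMA r:{1..<M}. {..<K r})"
    unfolding genus_def kunz_set_complement[OF assms] by (rule card_image)
  then show "genus (kunz_set M K) = sum K {1..<M}" by (simp add: card_SigmaI)
  show "finite (UNIV - kunz_set M K)" unfolding kunz_set_complement[OF assms] by auto
qed

lemma genus_kunz_set_excess:
  assumes "0 < M" and "\<forall>r\<in>{1..<M}. 0 < K r"
  shows "genus (kunz_set M K) = (\<Sum>r\<in>{1..<M}. K r - 1) + (M - 1)"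
proof -
  have "sum K {1..<M} = (\<Sum>r\<in>{1..<M}. Suc (K r - 1))"
    using assms(2) by (intro sum.cong) auto
  then show ?thesis by (simp add: genus_kunz_set(1)[OF assms(1)] sum_Suc)
qed

lemma kunz_set_add_closed:
  assumes "0 < M" "kunz_admissible M K" "x \<in> kunz_set M K" "y \<in> kunz_set M K"
  shows "x + y \<in> kunz_set M K"
proof -
  obtain a i where x_eq: "x = a * M + i" and i_lt: "i < M" and x: "i = 0 \<or> K i \<le> a"
    using kunz_set_elim[OF assms(1,3)] .
  obtain b j where y_eq: "y = b * M + j" and j_lt: "j < M" and y: "j = 0 \<or> K j \<le> b"
    using kunz_set_elim[OF assms(1,4)] .
  consider (no_carry) "i + j < M" | (carry) "M \<le> i + j" by linarith
  then show ?thesis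
  proof cases
    case no_carry
    have "i + j = 0 \<or> K (i + j) \<le> a + b"
    proof (cases "i = 0 \<or> j = 0")
      case False
      then have "K (i + j) \<le> K i + K j"
        using assms(2) no_carry i_lt j_lt unfolding kunz_admissible_def by auto
      then show ?thesis using x y False by linarith
    qed (use x y in auto)
    then show ?thesis
      unfolding x_eq y_eq mult_add_add_mult_add(1)[OF no_carry] mem_kunz_set[OF no_carry] .
  next
    case carry
    have "i + j - M = 0 \<or> K (i + j - M) \<le> a + b + 1"
    proof (cases "i + j = M")
      case False
      then have "K (i + j - M) \<le> K i + K j + 1" "i \<noteq> 0" "j \<noteq> 0"
        using assms(2) carry i_lt j_lt unfolding kunz_admissible_def by auto
      then show ?thesis using x y by linarith
    qed simp
    moreover have "i + j - M < M" using i_lt j_lt by linarith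
    ultimately show ?thesis
      unfolding x_eq y_eq mult_add_add_mult_add(2)[OF carry] by (simp only: mem_kunz_set)
  qed
qed

lemma numerical_semigroup_kunz_set_iff:
  assumes "0 < M"
  shows "numerical_semigroup (kunz_set M K) \<longleftrightarrow> kunz_admissible M K"
proof
  assume "numerical_semigroup (kunz_set M K)"
  then have sum_mem: "(K i * M + i) + (K j * M + j) \<in> kunz_set M K" if "i < M" "j < M" for i j
    using that unfolding numerical_semigroup_def by (simp add: mem_kunz_set)
  have "K (i + j) \<le> K i + K j" if "i \<in> {1..<M}" "j \<in> {1..<M}" "i + j < M" for i j
    using sum_mem[of i j] that
    unfolding mult_add_add_mult_add(1)[OF \<open>i + j < M\<close>] mem_kunz_set[OF \<open>i + j < M\<close>] by simp
  moreover have "K (i + j - M) \<le> K i + K j + 1"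
    if "i \<in> {1..<M}" "j \<in> {1..<M}" "M < i + j" for i j
  proof -
    have "i + j - M < M" "M \<le> i + j" using that by auto
    then show ?thesis
      using sum_mem[of i j] that
      unfolding mult_add_add_mult_add(2)[OF \<open>M \<le> i + j\<close>] mem_kunz_set[OF \<open>i + j - M < M\<close>]
      by simp
  qed
  ultimately show "kunz_admissible M K" unfolding kunz_admissible_def by blast
next
  assume "kunz_admissible M K"
  then show "numerical_semigroup (kunz_set M K)"
    using kunz_set_add_closed genus_kunz_set(2) assms
    unfolding numerical_semigroup_def by (auto simp: kunz_set_def)
qed

lemma kunz_set_ge:
  assumes "\<forall>r\<in>{1..<M}. 0 < K r" "x \<in> kunz_set M K" "x \<noteq> 0"
  shows "M \<le> x"
proof (rule ccontr)
  assume "\<not> M \<le> x"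
  then have "K x \<le> 0"
    using mem_kunz_set[of x M 0 K] assms(2,3) by simp
  then show False using assms(1)[rule_format, of x] assms(3) \<open>\<not> M \<le> x\<close> by simp
qed

lemma multiplicity_kunz_set_iff:
  assumes "0 < M"
  shows "multiplicity (kunz_set M K) = M \<longleftrightarrow> (\<forall>r\<in>{1..<M}. 0 < K r)"
proof
  assume mult: "multiplicity (kunz_set M K) = M"
  show "\<forall>r\<in>{1..<M}. 0 < K r"
  proof (rule ccontr)
    assume "\<not> (\<forall>r\<in>{1..<M}. 0 < K r)"
    then obtain r where "r \<in> {1..<M}" "K r = 0" by auto
    then have "r \<in> kunz_set M K" using mem_kunz_set[of r M 0 K] by simp
    then have "M \<le> r" using multiplicity_le mult \<open>r \<in> {1..<M}\<close> by fastforce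
    then show False using \<open>r \<in> {1..<M}\<close> by simp
  qed
next
  assume pos: "\<forall>r\<in>{1..<M}. 0 < K r"
  show "multiplicity (kunz_set M K) = M"
    unfolding multiplicity_def
  proof (rule Least_equality)
    show "M \<in> kunz_set M K \<and> M \<noteq> 0" using assms by (simp add: kunz_set_def)
    show "\<And>y. y \<in> kunz_set M K \<and> y \<noteq> 0 \<Longrightarrow> M \<le> y" using kunz_set_ge[OF pos] by blast
  qed
qed

section \<open>Minimal generators\<close>

definition kunz_decomposable :: "nat \<Rightarrow> (nat \<Rightarrow> nat) \<Rightarrow> nat \<Rightarrow> bool" where
  "kunz_decomposable M K r \<longleftrightarrow> (\<exists>i\<in>{1..<M}. \<exists>j\<in>{1..<M}.
     (i + j = r \<and> K i + K j \<le> K r) \<or> (i + j = M + r \<and> K i + K j + 1 \<le> K r))"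

lemma kunz_decomposableI:
  assumes "i \<in> {1..<M}" "j \<in> {1..<M}"
    and "(i + j = r \<and> K i + K j \<le> K r) \<or> (i + j = M + r \<and> K i + K j + 1 \<le> K r)"
  shows "kunz_decomposable M K r"
  using assms unfolding kunz_decomposable_def by blast

lemma kunz_decomposable_if_sum:
  assumes r: "r \<in> {1..<M}" and "x \<in> kunz_set M K - {0}" "y \<in> kunz_set M K - {0}"
    and sum: "K r * M + r = x + y"
  shows "kunz_decomposable M K r"
proof -
  have "0 < M" using r by simp
  obtain a i where x_eq: "x = a * M + i" and i_lt: "i < M" and x: "i = 0 \<or> K i \<le> a"
    using kunz_set_elim[OF \<open>0 < M\<close>] assms(2) by blast
  obtain b j where y_eq: "y = b * M + j" and j_lt: "j < M" and y: "j = 0 \<or> K j \<le> b"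
    using kunz_set_elim[OF \<open>0 < M\<close>] assms(3) by blast
  have rM: "r < M" using r by simp
  consider (no_carry) "i + j < M" | (carry) "M \<le> i + j" by linarith
  then show ?thesis
  proof cases
    case no_carry
    have "K r * M + r = (a + b) * M + (i + j)"
      using sum unfolding x_eq y_eq mult_add_add_mult_add(1)[OF no_carry] .
    then have "K r = a + b" "r = i + j"
      using mult_add_eq_mult_add_iff[OF rM no_carry] by blast+
    moreover have "i \<noteq> 0 \<and> j \<noteq> 0"
    proof (rule ccontr)
      assume "\<not> (i \<noteq> 0 \<and> j \<noteq> 0)"
      then have "(i = 0 \<and> j = r \<and> 0 < a) \<or> (j = 0 \<and> i = r \<and> 0 < b)"
        using assms(2,3) \<open>r = i + j\<close> by (auto simp: x_eq y_eq)
      then show False using x y r \<open>K r = a + b\<close> by auto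
    qed
    ultimately show ?thesis using kunz_decomposableI[of i M j r K] x y i_lt j_lt by auto
  next
    case carry
    have "i + j - M < M" using i_lt j_lt by linarith
    have "K r * M + r = (a + b + 1) * M + (i + j - M)"
      using sum unfolding x_eq y_eq mult_add_add_mult_add(2)[OF carry] .
    then have "K r = a + b + 1" "r = i + j - M"
      using mult_add_eq_mult_add_iff[OF rM \<open>i + j - M < M\<close>] by blast+
    moreover have "i \<noteq> 0" "j \<noteq> 0" using i_lt j_lt r \<open>r = i + j - M\<close> by auto
    ultimately show ?thesis using kunz_decomposableI[of i M j r K] x y i_lt j_lt r by auto
  qed
qed

lemma kunz_set_sum_if_decomposable:
  assumes r: "r \<in> {1..<M}" and "kunz_decomposable M K r"
  obtains x y where "x \<in> kunz_set M K - {0}" "y \<in> kunz_set M K - {0}" "K r * M + r = x + y"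
proof -
  obtain i j where ij: "i \<in> {1..<M}" "j \<in> {1..<M}"
    and split: "(i + j = r \<and> K i + K j \<le> K r) \<or> (i + j = M + r \<and> K i + K j + 1 \<le> K r)"
    using assms(2) unfolding kunz_decomposable_def by blast
  have x: "K i * M + i \<in> kunz_set M K - {0}" using ij by (simp add: mem_kunz_set)
  from split show thesis
  proof
    assume no_carry: "i + j = r \<and> K i + K j \<le> K r"
    then have "K j \<le> K r - K i" by linarith
    then have y: "(K r - K i) * M + j \<in> kunz_set M K - {0}" using ij by (simp add: mem_kunz_set)
    have "K r * M + r = (K i * M + i) + ((K r - K i) * M + j)"
      using r no_carry by (subst mult_add_add_mult_add(1)) auto
    then show thesis using that x y by blast
  next
    assume carry: "i + j = M + r \<and> K i + K j + 1 \<le> K r"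
    then have "K j \<le> K r - K i - 1" by linarith
    then have y: "(K r - K i - 1) * M + j \<in> kunz_set M K - {0}"
      using ij by (simp add: mem_kunz_set)
    have "K r * M + r = (K i * M + i) + ((K r - K i - 1) * M + j)"
      using carry by (subst mult_add_add_mult_add(2)) auto
    then show thesis using that x y by blast
  qed
qed

lemma kunz_set_sum_iff_decomposable:
  assumes "r \<in> {1..<M}"
  shows "K r * M + r \<in> {x + y | x y. x \<in> kunz_set M K - {0} \<and> y \<in> kunz_set M K - {0}}
    \<longleftrightarrow> kunz_decomposable M K r"
  using kunz_decomposable_if_sum[OF assms] kunz_set_sum_if_decomposable[OF assms] by blast

lemma min_generator_kunz_set_cases:
  assumes "0 < M" and pos: "\<forall>r\<in>{1..<M}. 0 < K r" and "x \<in> min_generators (kunz_set M K)"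
  shows "x = M \<or> (\<exists>r\<in>{1..<M}. \<not> kunz_decomposable M K r \<and> x = K r * M + r)"
proof -
  have x: "x \<in> kunz_set M K" "x \<noteq> 0"
    and indec: "x \<notin> {u + v | u v. u \<in> kunz_set M K - {0} \<and> v \<in> kunz_set M K - {0}}"
    using assms(3) unfolding min_generators_def by auto
  obtain q r where xqr: "x = q * M + r" and r: "r < M" and "r = 0 \<or> K r \<le> q"
    using kunz_set_elim[OF assms(1) x(1)] .
  have "M \<le> x" using kunz_set_ge[OF pos x] .
  then have "0 < q" using r by (cases "q = 0") (auto simp: xqr)
  then have x_minus_M: "x - M = (q - 1) * M + r" by (cases q) (simp_all add: xqr)
  have "M \<in> kunz_set M K - {0}" using \<open>0 < M\<close> by (simp add: kunz_set_def)
  moreover have "x = M + (x - M)" using \<open>M \<le> x\<close> by simp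
  ultimately have x_minus_M_notin: "x - M \<notin> kunz_set M K - {0}" using indec by blast
  have shift: "q = 1 \<and> r = 0" if "r = 0 \<or> K r \<le> q - 1"
  proof -
    have "x - M \<in> kunz_set M K" using that unfolding x_minus_M mem_kunz_set[OF r] .
    then have "(q - 1) * M + r = 0" using x_minus_M_notin x_minus_M by simp
    then show ?thesis using \<open>0 < M\<close> \<open>0 < q\<close> by auto
  qed
  show ?thesis
  proof (cases "r = 0")
    case True
    then show ?thesis using shift by (simp add: xqr)
  next
    case False
    then have "K r = q" using shift \<open>r = 0 \<or> K r \<le> q\<close> by fastforce
    then have "K r * M + r \<notin> {u + v | u v. u \<in> kunz_set M K - {0} \<and> v \<in> kunz_set M K - {0}}"
      using indec by (simp add: xqr)
    moreover have "r \<in> {1..<M}" using False r by simp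
    ultimately show ?thesis using kunz_set_sum_iff_decomposable \<open>K r = q\<close> xqr by blast
  qed
qed

lemma min_generators_kunz_set:
  assumes "0 < M" and pos: "\<forall>r\<in>{1..<M}. 0 < K r"
  shows "min_generators (kunz_set M K) =
    insert M ((\<lambda>r. K r * M + r) ` {r\<in>{1..<M}. \<not> kunz_decomposable M K r})"
proof (intro set_eqI iffI)
  fix x assume "x \<in> min_generators (kunz_set M K)"
  then show "x \<in> insert M ((\<lambda>r. K r * M + r) ` {r\<in>{1..<M}. \<not> kunz_decomposable M K r})"
    using min_generator_kunz_set_cases[OF assms] by blast
next
  fix x assume "x \<in> insert M ((\<lambda>r. K r * M + r) ` {r\<in>{1..<M}. \<not> kunz_decomposable M K r})"
  then consider "x = M"
    | r where "r \<in> {1..<M}" "\<not> kunz_decomposable M K r" "x = K r * M + r" by auto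
  then show "x \<in> min_generators (kunz_set M K)"
  proof cases
    case 1
    have "u + v \<noteq> M" if "u \<in> kunz_set M K - {0}" "v \<in> kunz_set M K - {0}" for u v
    proof -
      have "M \<le> u" "M \<le> v" using kunz_set_ge[OF pos] that by auto
      then show ?thesis using \<open>0 < M\<close> by linarith
    qed
    moreover have "M \<in> kunz_set M K - {0}" using \<open>0 < M\<close> by (simp add: kunz_set_def)
    ultimately show ?thesis using 1 unfolding min_generators_def by blast
  next
    case 2
    then show ?thesis
      using kunz_set_sum_iff_decomposable[of r M K]
      by (simp add: min_generators_def mem_kunz_set)
  qed
qed

lemma embedding_dimension_kunz_set:
  assumes "0 < M" and "\<forall>r\<in>{1..<M}. 0 < K r"
  shows "embedding_dimension (kunz_set M K) = M - card {r\<in>{1..<M}. kunz_decomposable M K r}"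
proof -
  let ?I = "{r\<in>{1..<M}. \<not> kunz_decomposable M K r}"
  have "inj_on (\<lambda>r. K r * M + r) ?I"
    by (rule inj_onI) (auto simp: mult_add_eq_mult_add_iff)
  moreover have "M \<notin> (\<lambda>r. K r * M + r) ` ?I"
  proof
    assume "M \<in> (\<lambda>r. K r * M + r) ` ?I"
    then obtain r where "r \<in> {1..<M}" "1 * M + 0 = K r * M + r" by auto
    then show False using mult_add_eq_mult_add_iff[of 0 M r 1 "K r"] by simp
  qed
  ultimately have "embedding_dimension (kunz_set M K) = card ?I + 1"
    unfolding embedding_dimension_def min_generators_kunz_set[OF assms]
    by (simp add: card_image)
  moreover have "M - 1 = card {r\<in>{1..<M}. kunz_decomposable M K r} + card ?I"
    using card_Int_Diff[of "{1..<M}" "Collect (kunz_decomposable M K)"]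
    by (simp add: Int_def set_diff_eq)
  ultimately show ?thesis using \<open>0 < M\<close> by linarith
qed

section \<open>Kunz coordinates of small excess\<close>

definition splits_into_ones :: "(nat \<Rightarrow> nat) \<Rightarrow> nat \<Rightarrow> bool" where
  "splits_into_ones K r \<longleftrightarrow> (\<exists>j\<in>{1..<r}. K j = 1 \<and> K (r - j) = 1)"

lemma splits_into_ones_iff_sum:
  assumes "r < N"
  shows "splits_into_ones K r \<longleftrightarrow> (\<exists>i\<in>{1..<N}. \<exists>j\<in>{1..<N}. i + j = r \<and> K i = 1 \<and> K j = 1)"
  unfolding splits_into_ones_def
proof
  assume "\<exists>j\<in>{1..<r}. K j = 1 \<and> K (r - j) = 1"
  then obtain j where j: "j \<in> {1..<r}" "K j = 1" "K (r - j) = 1" by blast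
  then have "j \<in> {1..<N}" "r - j \<in> {1..<N}" "j + (r - j) = r" using assms by auto
  then show "\<exists>i\<in>{1..<N}. \<exists>j\<in>{1..<N}. i + j = r \<and> K i = 1 \<and> K j = 1" using j by blast
next
  assume "\<exists>i\<in>{1..<N}. \<exists>j\<in>{1..<N}. i + j = r \<and> K i = 1 \<and> K j = 1"
  then obtain i j where "i \<in> {1..<N}" "j \<in> {1..<N}" "i + j = r" "K i = 1" "K j = 1" by blast
  then show "\<exists>j\<in>{1..<r}. K j = 1 \<and> K (r - j) = 1" by (intro bexI[of _ i]) auto
qed

lemma kunz_decomposable_if_splits:
  assumes "r < M" and "splits_into_ones K r" and "2 \<le> K r"
  shows "kunz_decomposable M K r"
proof -
  obtain i j where "i \<in> {1..<M}" "j \<in> {1..<M}" "i + j = r" "K i = 1" "K j = 1"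
    using assms(2) splits_into_ones_iff_sum[OF assms(1)] by blast
  then show ?thesis using assms(3) by (intro kunz_decomposableI[of i M j]) auto
qed

lemma kunz_admissible_not_splits:
  assumes "kunz_admissible M K" "r < M" "3 \<le> K r"
  shows "\<not> splits_into_ones K r"
proof
  assume "splits_into_ones K r"
  then obtain j where "j \<in> {1..<r}" "K j = 1" "K (r - j) = 1"
    unfolding splits_into_ones_def by blast
  with kunz_admissibleD(1)[OF assms(1), of j "r - j"] assms(2,3) show False by simp
qed

lemma kunz_admissible_iff_threes_not_split:
  assumes "\<forall>r\<in>{1..<M}. K r \<in> {1, 2, 3}"
  shows "kunz_admissible M K \<longleftrightarrow> (\<forall>r\<in>{1..<M}. K r = 3 \<longrightarrow> \<not> splits_into_ones K r)"
proof
  assume "kunz_admissible M K"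
  then show "\<forall>r\<in>{1..<M}. K r = 3 \<longrightarrow> \<not> splits_into_ones K r"
    using kunz_admissible_not_splits by auto
next
  assume threes: "\<forall>r\<in>{1..<M}. K r = 3 \<longrightarrow> \<not> splits_into_ones K r"
  have range: "1 \<le> K r \<and> K r \<le> 3" if "r \<in> {1..<M}" for r
    using assms[rule_format, OF that] by auto
  have "K (i + j) \<le> K i + K j" if "i \<in> {1..<M}" "j \<in> {1..<M}" "i + j < M" for i j
  proof -
    have "i \<in> {1..<i + j}" "i + j - i = j" using that by auto
    then have "K (i + j) = 3 \<longrightarrow> \<not> (K i = 1 \<and> K j = 1)"
      using threes that unfolding splits_into_ones_def by fastforce
    moreover have "i + j \<in> {1..<M}" using that by auto
    ultimately show ?thesis using range[of i] range[of j] range[of "i + j"] that by linarith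
  qed
  moreover have "K (i + j - M) \<le> K i + K j + 1"
    if "i \<in> {1..<M}" "j \<in> {1..<M}" "M < i + j" for i j
  proof -
    have "i + j - M \<in> {1..<M}" using that by auto
    then have "K (i + j - M) \<le> 3" "1 \<le> K i" "1 \<le> K j" using range that by auto
    then show ?thesis by linarith
  qed
  ultimately show "kunz_admissible M K" unfolding kunz_admissible_def by blast
qed

lemma card_le_twice_sum_involution:
  fixes y :: "'a \<Rightarrow> nat"
  assumes "\<forall>j\<in>A. \<sigma> j \<in> A \<and> \<sigma> (\<sigma> j) = j" and "\<forall>j\<in>A. 0 < y j + y (\<sigma> j)"
  shows "card A \<le> 2 * sum y A"
proof -
  have "bij_betw \<sigma> A A" by (rule bij_betw_byWitness[where f' = \<sigma>]) (use assms(1) in auto)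
  then have reindex: "(\<Sum>j\<in>A. y (\<sigma> j)) = sum y A" by (rule sum.reindex_bij_betw)
  have "card A = (\<Sum>j\<in>A. 1)" by simp
  also have "\<dots> \<le> (\<Sum>j\<in>A. y j + y (\<sigma> j))" using assms(2) by (intro sum_mono) auto
  also have "\<dots> = 2 * sum y A" by (simp add: sum.distrib reindex)
  finally show ?thesis .
qed

lemma excess_eq_counts:
  fixes K :: "nat \<Rightarrow> nat"
  assumes "2 * n \<le> M" "\<forall>i\<in>{1..<M}. K i \<in> {1, 2, 3}" "\<forall>i\<in>{1..<M}. K i = 3 \<longrightarrow> i < 2 * n"
  shows "(\<Sum>i\<in>{1..<M}. K i - 1) = card {i\<in>{1..<2 * n}. K i = 2}
    + 2 * card {i\<in>{1..<2 * n}. K i = 3} + card {i\<in>{1..<M}. 2 * n \<le> i \<and> K i = 2}"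
proof -
  have "(\<Sum>i\<in>{1..<M}. K i - 1) = (\<Sum>i\<in>{1..<M}. of_bool (K i = 2) + 2 * of_bool (K i = 3))"
  proof (rule sum.cong)
    fix i assume "i \<in> {1..<M}"
    then have "K i \<in> {1, 2, 3}" using assms(2) by blast
    then show "K i - 1 = of_bool (K i = 2) + 2 * of_bool (K i = 3)" by auto
  qed simp
  also have "\<dots> = card {i\<in>{1..<M}. K i = 2} + 2 * card {i\<in>{1..<M}. K i = 3}"
    unfolding sum.distrib sum_distrib_left[symmetric] sum_of_bool_eq[OF finite_atLeastLessThan]
    by (simp add: Int_def)
  also have "{i\<in>{1..<M}. K i = 2} =
      {i\<in>{1..<2 * n}. K i = 2} \<union> {i\<in>{1..<M}. 2 * n \<le> i \<and> K i = 2}"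
    using assms(1) by auto
  also have "{i\<in>{1..<M}. K i = 3} = {i\<in>{1..<2 * n}. K i = 3}"
    using assms by auto
  finally show ?thesis by (simp add: card_Un_disjoint disjoint_iff)
qed

text \<open>
  Conditions (1)-(5) of good_seq for x_i = K i and k1 = n - 1; the positions i <= 2 k1 + 1
  are those with i < 2n.
\<close>

definition good_kunz_coords :: "nat \<Rightarrow> nat \<Rightarrow> int \<Rightarrow> (nat \<Rightarrow> nat) \<Rightarrow> bool" where
  "good_kunz_coords M n k2 K \<longleftrightarrow>
     (\<forall>i\<in>{1..<M}. K i \<in> {1, 2, 3}) \<and>
     (\<forall>i\<in>{1..<M}. 2 * n \<le> i + 2 \<longrightarrow> K i \<in> {1, 2}) \<and>
     (\<forall>i\<in>{1..<2 * n}. K i = 3 \<longrightarrow> \<not> splits_into_ones K i) \<and>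
     int (card {i\<in>{1..<M}. 2 * n \<le> i \<and> K i = 2}) =
       int n - int (card {i\<in>{1..<2 * n}. K i = 2}) - 2 * int (card {i\<in>{1..<2 * n}. K i = 3}) \<and>
     int (card {i\<in>{1..<2 * n}. K i = 2}) + int (card {i\<in>{1..<2 * n}. K i = 3})
       - int (card {i\<in>{1..<2 * n}. K i = 2 \<and> splits_into_ones K i}) = 2 * int n - 1 - k2"

text \<open>
  For S = kunz_set M K the genus is M - 1 + n; the theorem's k1 is n - 1, and its hypothesis
  m >= 2 k1 + 2 is 2n <= M.
\<close>

locale kunz_low_genus =
  fixes M n :: nat and K :: "nat \<Rightarrow> nat"
  assumes admissible: "kunz_admissible M K"
    and pos: "\<forall>r\<in>{1..<M}. 0 < K r"
    and excess: "(\<Sum>r\<in>{1..<M}. K r - 1) = n"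
    and twice_excess_le: "2 * n \<le> M"
begin

lemma pos_coord: "r \<in> {1..<M} \<Longrightarrow> 0 < K r"
  using pos by blast

lemma excess_split:
  assumes "r \<in> {1..<M}"
  shows "n = (\<Sum>j\<in>{1..<r}. K j - 1) + (K r - 1) + (\<Sum>j\<in>{r<..<M}. K j - 1)"
proof -
  have "{1..<M} = {1..<r} \<union> insert r {r<..<M}" using assms by auto
  then have "(\<Sum>j\<in>{1..<M}. K j - 1) =
      (\<Sum>j\<in>{1..<r}. K j - 1) + (\<Sum>j\<in>insert r {r<..<M}. K j - 1)"
    by (simp only:) (rule sum.union_disjoint, auto)
  then show ?thesis using excess by simp
qed

lemma excess_below:
  assumes "r < M" and "\<not> splits_into_ones K r"
  shows "r - 1 \<le> 2 * (\<Sum>j\<in>{1..<r}. K j - 1)"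
proof -
  have "card {1..<r} \<le> 2 * (\<Sum>j\<in>{1..<r}. K j - 1)"
  proof (rule card_le_twice_sum_involution[where \<sigma> = "\<lambda>j. r - j"])
    show "\<forall>j\<in>{1..<r}. r - j \<in> {1..<r} \<and> r - (r - j) = j" by auto
    show "\<forall>j\<in>{1..<r}. 0 < (K j - 1) + (K (r - j) - 1)"
    proof
      fix j assume "j \<in> {1..<r}"
      moreover have "r - j \<in> {1..<M}" using \<open>j \<in> {1..<r}\<close> assms(1) by auto
      ultimately have "0 < K j" "0 < K (r - j)" "\<not> (K j = 1 \<and> K (r - j) = 1)"
        using pos_coord assms unfolding splits_into_ones_def by auto
      then show "0 < (K j - 1) + (K (r - j) - 1)" by linarith
    qed
  qed
  then show ?thesis by simp
qed

lemma excess_above: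
  assumes "r < M" and "\<forall>j\<in>{r<..<M}. \<not> (K j = 1 \<and> K (M + r - j) = 1)"
  shows "M - 1 - r \<le> 2 * (\<Sum>j\<in>{r<..<M}. K j - 1)"
proof -
  have "card {r<..<M} \<le> 2 * (\<Sum>j\<in>{r<..<M}. K j - 1)"
  proof (rule card_le_twice_sum_involution[where \<sigma> = "\<lambda>j. M + r - j"])
    show "\<forall>j\<in>{r<..<M}. M + r - j \<in> {r<..<M} \<and> M + r - (M + r - j) = j" by auto
    show "\<forall>j\<in>{r<..<M}. 0 < (K j - 1) + (K (M + r - j) - 1)"
    proof
      fix j assume "j \<in> {r<..<M}"
      moreover have "M + r - j \<in> {1..<M}" using \<open>j \<in> {r<..<M}\<close> by auto
      ultimately have "0 < K j" "0 < K (M + r - j)" "\<not> (K j = 1 \<and> K (M + r - j) = 1)"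
        using pos_coord assms by auto
      then show "0 < (K j - 1) + (K (M + r - j) - 1)" by linarith
    qed
  qed
  then show ?thesis by simp
qed

lemma coord_le_3:
  assumes r: "r \<in> {1..<M}"
  shows "K r \<le> 3"
proof (rule ccontr)
  assume "\<not> K r \<le> 3"
  have "\<not> (K j = 1 \<and> K (M + r - j) = 1)" if "j \<in> {r<..<M}" for j
  proof -
    have "K (j + (M + r - j) - M) \<le> K j + K (M + r - j) + 1"
      using kunz_admissibleD(2)[OF admissible, of j "M + r - j"] that r by auto
    then show ?thesis using \<open>\<not> K r \<le> 3\<close> that by auto
  qed
  then have "M - 1 - r \<le> 2 * (\<Sum>j\<in>{r<..<M}. K j - 1)"
    using excess_above r by auto
  moreover have "r - 1 \<le> 2 * (\<Sum>j\<in>{1..<r}. K j - 1)"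
    using excess_below kunz_admissible_not_splits[OF admissible] r \<open>\<not> K r \<le> 3\<close> by auto
  ultimately show False using excess_split[OF r] twice_excess_le r \<open>\<not> K r \<le> 3\<close> by linarith
qed

lemma coord_3_lt:
  assumes r: "r \<in> {1..<M}" and "K r = 3"
  shows "r + 2 < 2 * n"
proof -
  have "r - 1 \<le> 2 * (\<Sum>j\<in>{1..<r}. K j - 1)"
    using excess_below kunz_admissible_not_splits[OF admissible] r \<open>K r = 3\<close> by auto
  then show ?thesis using excess_split[OF r] r \<open>K r = 3\<close> by linarith
qed

lemma coord_3_decomposable:
  assumes r: "r \<in> {1..<M}" and "K r = 3"
  shows "kunz_decomposable M K r"
proof (rule ccontr)
  assume not_dec: "\<not> kunz_decomposable M K r"
  have "\<not> splits_into_ones K r"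
  proof
    assume "splits_into_ones K r"
    then show False using kunz_decomposable_if_splits[of r M K] not_dec r \<open>K r = 3\<close> by simp
  qed
  then have "r - 1 \<le> 2 * (\<Sum>j\<in>{1..<r}. K j - 1)" using excess_below r by auto
  moreover have "\<not> (K j = 1 \<and> K (M + r - j) = 1)" if "j \<in> {r<..<M}" for j
  proof -
    have ij: "j \<in> {1..<M}" "M + r - j \<in> {1..<M}" and "j + (M + r - j) = M + r"
      using that by auto
    then show ?thesis using kunz_decomposableI[OF ij] not_dec \<open>K r = 3\<close> by auto
  qed
  then have "M - 1 - r \<le> 2 * (\<Sum>j\<in>{r<..<M}. K j - 1)" using excess_above r by auto
  ultimately show False using excess_split[OF r] twice_excess_le r \<open>K r = 3\<close> by linarith
qed

lemma coord_2_splits: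
  assumes r: "r \<in> {1..<M}" and "K r = 2" and "2 * n \<le> r"
  shows "splits_into_ones K r"
proof (rule ccontr)
  assume "\<not> splits_into_ones K r"
  then have "r - 1 \<le> 2 * (\<Sum>j\<in>{1..<r}. K j - 1)" using excess_below r by auto
  then show False using excess_split[OF r] assms by linarith
qed

lemma decomposable_iff:
  assumes r: "r \<in> {1..<M}"
  shows "kunz_decomposable M K r \<longleftrightarrow> K r = 3 \<or> (K r = 2 \<and> splits_into_ones K r)"
proof
  assume "kunz_decomposable M K r"
  then obtain i j where ij: "i \<in> {1..<M}" "j \<in> {1..<M}"
    and sum: "(i + j = r \<and> K i + K j \<le> K r) \<or> (i + j = M + r \<and> K i + K j + 1 \<le> K r)"
    unfolding kunz_decomposable_def by blast
  have "0 < K i" "0 < K j" using pos ij by auto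
  moreover have "K r \<le> 3" using coord_le_3[OF r] .
  moreover have "splits_into_ones K r" if "K r = 2"
  proof -
    have "i + j = r" "K i = 1" "K j = 1" using sum that \<open>0 < K i\<close> \<open>0 < K j\<close> by auto
    moreover have "r < M" using r by simp
    ultimately show ?thesis using splits_into_ones_iff_sum[of r M K] ij by blast
  qed
  ultimately show "K r = 3 \<or> (K r = 2 \<and> splits_into_ones K r)" using sum by linarith
next
  assume "K r = 3 \<or> (K r = 2 \<and> splits_into_ones K r)"
  then show "kunz_decomposable M K r"
  proof (elim disjE conjE)
    assume "K r = 2" and "splits_into_ones K r"
    then show ?thesis using kunz_decomposable_if_splits[of r M K] r by simp
  qed (rule coord_3_decomposable[OF r])
qed

lemma card_decomposable:
  "card {r\<in>{1..<M}. kunz_decomposable M K r} =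
     card {r\<in>{1..<2 * n}. K r = 3} + card {r\<in>{1..<2 * n}. K r = 2 \<and> splits_into_ones K r}
     + card {r\<in>{1..<M}. 2 * n \<le> r \<and> K r = 2}"
proof -
  have "{r\<in>{1..<M}. kunz_decomposable M K r} =
     {r\<in>{1..<2 * n}. K r = 3} \<union> {r\<in>{1..<2 * n}. K r = 2 \<and> splits_into_ones K r}
     \<union> {r\<in>{1..<M}. 2 * n \<le> r \<and> K r = 2}"
    using decomposable_iff coord_3_lt coord_2_splits twice_excess_le by force
  then show ?thesis by (simp add: card_Un_disjoint disjoint_iff)
qed

lemma good_kunz_coords_iff:
  "good_kunz_coords M n k2 K \<longleftrightarrow> int (card {r\<in>{1..<M}. kunz_decomposable M K r}) = k2 - int n + 1"
proof -
  have range: "\<forall>i\<in>{1..<M}. K i \<in> {1, 2, 3}"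
  proof
    fix i assume "i \<in> {1..<M}"
    then have "0 < K i" "K i \<le> 3" using pos_coord coord_le_3 by auto
    then show "K i \<in> {1, 2, 3}" by auto
  qed
  have threes_lt: "\<forall>i\<in>{1..<M}. K i = 3 \<longrightarrow> i + 2 < 2 * n" using coord_3_lt by blast
  have "\<forall>i\<in>{1..<2 * n}. K i = 3 \<longrightarrow> \<not> splits_into_ones K i"
    using kunz_admissible_not_splits[OF admissible] twice_excess_le by auto
  moreover have "\<forall>i\<in>{1..<M}. 2 * n \<le> i + 2 \<longrightarrow> K i \<in> {1, 2}"
    using range threes_lt by fastforce
  moreover have "n = card {i\<in>{1..<2 * n}. K i = 2} + 2 * card {i\<in>{1..<2 * n}. K i = 3}
      + card {i\<in>{1..<M}. 2 * n \<le> i \<and> K i = 2}"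
    using excess_eq_counts[OF twice_excess_le range] threes_lt excess by fastforce
  ultimately show ?thesis
    unfolding good_kunz_coords_def card_decomposable using range by auto
qed

end

lemma kunz_low_genus_if_good_kunz_coords:
  assumes "2 * n \<le> M" and good: "good_kunz_coords M n k2 K"
  shows "kunz_low_genus M n K"
proof
  have range: "\<forall>i\<in>{1..<M}. K i \<in> {1, 2, 3}" and threes_lt: "\<forall>i\<in>{1..<M}. K i = 3 \<longrightarrow> i < 2 * n"
    using good unfolding good_kunz_coords_def by fastforce+
  then show "kunz_admissible M K"
    using good kunz_admissible_iff_threes_not_split unfolding good_kunz_coords_def by auto
  show "\<forall>r\<in>{1..<M}. 0 < K r" using range by auto
  show "(\<Sum>r\<in>{1..<M}. K r - 1) = n"
    using excess_eq_counts[OF assms(1) range threes_lt] good unfolding good_kunz_coords_def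
    by linarith
qed (rule assms(1))

section \<open>Kunz coordinates as sequences\<close>

lemma cnt_a_map_upt: "cnt_a (map K [1..<N]) = card {i\<in>{1..<N}. K i = 2}"
  unfolding cnt_a_def by (rule arg_cong[where f = card]) auto

lemma cnt_b_map_upt: "cnt_b (map K [1..<N]) = card {i\<in>{1..<N}. K i = 3}"
  unfolding cnt_b_def by (rule arg_cong[where f = card]) auto

lemma cnt_c_map_upt:
  "cnt_c (map K [1..<N]) = card {i\<in>{1..<N}. K i = 2 \<and> splits_into_ones K i}"
proof -
  have "{1..N - 1} = {1..<N}" by auto
  then show ?thesis
    unfolding cnt_c_def
    by (intro arg_cong[where f = card] Collect_cong)
      (simp add: splits_into_ones_iff_sum cong: conj_cong, blast)
qed

lemma no_113_iff_threes_not_split: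
  assumes "2 * n \<le> length xs + 1" and nth: "\<And>i. i \<in> {1..length xs} \<Longrightarrow> xs ! (i - 1) = K i"
  shows "(\<forall>i1\<in>{1..length xs}. \<forall>i2\<in>{1..length xs}. \<forall>i3\<in>{1..length xs}.
        int i1 \<le> 2 * (int n - 1) + 1 \<and> int i2 \<le> 2 * (int n - 1) + 1
        \<and> int i3 \<le> 2 * (int n - 1) + 1 \<and> i1 + i2 = i3
        \<longrightarrow> (xs ! (i1 - 1), xs ! (i2 - 1), xs ! (i3 - 1)) \<noteq> (1, 1, 3))
    \<longleftrightarrow> (\<forall>i\<in>{1..<2 * n}. K i = 3 \<longrightarrow> \<not> splits_into_ones K i)"
    (is "?no_113 \<longleftrightarrow> _")
proof
  assume ?no_113
  show "\<forall>i\<in>{1..<2 * n}. K i = 3 \<longrightarrow> \<not> splits_into_ones K i"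
  proof (intro ballI impI notI)
    fix i assume i: "i \<in> {1..<2 * n}" "K i = 3" "splits_into_ones K i"
    then obtain j where j: "j \<in> {1..<i}" "K j = 1" "K (i - j) = 1"
      unfolding splits_into_ones_def by blast
    have ij: "j \<in> {1..length xs}" "i - j \<in> {1..length xs}" "i \<in> {1..length xs}"
      and "int j \<le> 2 * (int n - 1) + 1 \<and> int (i - j) \<le> 2 * (int n - 1) + 1
        \<and> int i \<le> 2 * (int n - 1) + 1 \<and> j + (i - j) = i"
      using i(1) j(1) assms(1) by auto
    then have "(xs ! (j - 1), xs ! (i - j - 1), xs ! (i - 1)) \<noteq> (1, 1, 3)"
      using \<open>?no_113\<close> by blast
    then show False using nth[OF ij(1)] nth[OF ij(2)] nth[OF ij(3)] i(2) j(2,3) by simp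
  qed
next
  assume threes: "\<forall>i\<in>{1..<2 * n}. K i = 3 \<longrightarrow> \<not> splits_into_ones K i"
  show ?no_113
  proof (intro ballI impI notI)
    fix i1 i2 i3 assume i: "i1 \<in> {1..length xs}" "i2 \<in> {1..length xs}" "i3 \<in> {1..length xs}"
      and bounds: "int i1 \<le> 2 * (int n - 1) + 1 \<and> int i2 \<le> 2 * (int n - 1) + 1
        \<and> int i3 \<le> 2 * (int n - 1) + 1 \<and> i1 + i2 = i3"
      and "(xs ! (i1 - 1), xs ! (i2 - 1), xs ! (i3 - 1)) = (1, 1, 3)"
    then have "K i1 = 1" "K i2 = 1" "K i3 = 3" using nth by auto
    moreover have "i1 \<in> {1..<i3}" "i3 - i1 = i2" "i3 \<in> {1..<2 * n}" using i bounds by auto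
    ultimately show False using threes unfolding splits_into_ones_def by auto
  qed
qed

lemma good_seq_map_upt_iff:
  assumes "0 < M" and "2 * n \<le> M"
  shows "good_seq (int n - 1) k2 (int M) (map K [1..<M]) \<longleftrightarrow> good_kunz_coords M n k2 K"
proof -
  define xs where "xs = map K [1..<M]"
  have len: "{1..length xs} = {1..<M}" and nth: "\<And>i. i \<in> {1..<M} \<Longrightarrow> xs ! (i - 1) = K i"
    by (auto simp: xs_def)
  have length: "int (length xs) = int M - 1" using assms(1) by (simp add: xs_def)
  have range: "(\<forall>i\<in>{1..length xs}. xs ! (i - 1) \<in> {1, 2, 3}) \<longleftrightarrow> (\<forall>i\<in>{1..<M}. K i \<in> {1, 2, 3})"
    unfolding len using nth by auto
  have twos: "(\<forall>i\<in>{1..length xs}. int i \<ge> 2 * (int n - 1) \<longrightarrow> xs ! (i - 1) \<in> {1, 2})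
      \<longleftrightarrow> (\<forall>i\<in>{1..<M}. 2 * n \<le> i + 2 \<longrightarrow> K i \<in> {1, 2})"
    unfolding len using nth by auto
  have high_twos: "{i \<in> {1..length xs}. 2 * (int n - 1) + 2 \<le> int i \<and> int i \<le> int M - 1
      \<and> xs ! (i - 1) = 2} = {i\<in>{1..<M}. 2 * n \<le> i \<and> K i = 2}"
    unfolding len using nth by auto
  have "nat (2 * (int n - 1) + 1) = 2 * n - 1" by simp
  then have xbar: "take (nat (2 * (int n - 1) + 1)) xs = map K [1..<2 * n]"
    using assms(2) by (cases n) (simp_all add: xs_def take_map)
  have "2 * n \<le> length xs + 1" using assms by (simp add: xs_def)
  moreover have "\<And>i. i \<in> {1..length xs} \<Longrightarrow> xs ! (i - 1) = K i" using nth unfolding len .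
  ultimately have no_113: "(\<forall>i1\<in>{1..length xs}. \<forall>i2\<in>{1..length xs}. \<forall>i3\<in>{1..length xs}.
        int i1 \<le> 2 * (int n - 1) + 1 \<and> int i2 \<le> 2 * (int n - 1) + 1
        \<and> int i3 \<le> 2 * (int n - 1) + 1 \<and> i1 + i2 = i3
        \<longrightarrow> (xs ! (i1 - 1), xs ! (i2 - 1), xs ! (i3 - 1)) \<noteq> (1, 1, 3))
    \<longleftrightarrow> (\<forall>i\<in>{1..<2 * n}. K i = 3 \<longrightarrow> \<not> splits_into_ones K i)"
    by (rule no_113_iff_threes_not_split)
  show ?thesis
    unfolding good_seq_def good_kunz_coords_def Let_def xs_def[symmetric]
      range twos no_113 high_twos xbar cnt_a_map_upt cnt_b_map_upt cnt_c_map_upt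
    using length by simp
qed

lemma good_seq_length: "good_seq k1 k2 (int M) xs \<Longrightarrow> length xs = M - 1"
  unfolding good_seq_def by linarith

lemma map_nth_upt_pred: "length xs = M - 1 \<Longrightarrow> map (\<lambda>r. xs ! (r - 1)) [1..<M] = xs"
  by (rule nth_equalityI) auto

lemma kunz_set_class_iff:
  assumes "0 < M" and pos: "\<forall>r\<in>{1..<M}. 0 < K r"
  shows "numerical_semigroup (kunz_set M K) \<and> int (multiplicity (kunz_set M K)) = int M
      \<and> int (genus (kunz_set M K)) = int M + (int n - 1)
      \<and> int (embedding_dimension (kunz_set M K)) = int (genus (kunz_set M K)) - k2
    \<longleftrightarrow> kunz_admissible M K \<and> (\<Sum>r\<in>{1..<M}. K r - 1) = n
      \<and> int (card {r\<in>{1..<M}. kunz_decomposable M K r}) = k2 - int n + 1"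
proof -
  define e where "e = (\<Sum>r\<in>{1..<M}. K r - 1)"
  have "card {r\<in>{1..<M}. kunz_decomposable M K r} \<le> card {1..<M}" by (rule card_mono) auto
  then show ?thesis
    unfolding numerical_semigroup_kunz_set_iff[OF assms(1)] genus_kunz_set_excess[OF assms]
      embedding_dimension_kunz_set[OF assms] pos[THEN multiplicity_kunz_set_iff[OF assms(1), THEN iffD2]]
      e_def[symmetric]
    using assms(1) by auto
qed

lemma kunz_set_class_iff_good_seq:
  assumes "2 * n \<le> M"
  shows "numerical_semigroup (kunz_set M K) \<and> int (multiplicity (kunz_set M K)) = int M
      \<and> int (genus (kunz_set M K)) = int M + (int n - 1)
      \<and> int (embedding_dimension (kunz_set M K)) = int (genus (kunz_set M K)) - k2
    \<longleftrightarrow> good_seq (int n - 1) k2 (int M) (map K [1..<M])"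
proof (cases "M = 0")
  case True
  then have "\<not> good_seq (int n - 1) k2 (int M) (map K [1..<M])" unfolding good_seq_def by simp
  moreover have "\<not> (numerical_semigroup (kunz_set M K) \<and> multiplicity (kunz_set M K) = M)"
    using multiplicity_mem(2)[of "kunz_set M K"] True by auto
  ultimately show ?thesis by (simp only: of_nat_eq_iff) blast
next
  case False
  then have "0 < M" by simp
  show ?thesis
  proof (cases "\<forall>r\<in>{1..<M}. 0 < K r")
    case False
    then obtain r where "r \<in> {1..<M}" "K r = 0" by auto
    then have "\<not> good_kunz_coords M n k2 K" unfolding good_kunz_coords_def by fastforce
    moreover have "multiplicity (kunz_set M K) \<noteq> M"
      using multiplicity_kunz_set_iff[OF \<open>0 < M\<close>] False by blast
    ultimately show ?thesis using good_seq_map_upt_iff[OF \<open>0 < M\<close> assms] by simp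
  next
    case pos: True
    have "kunz_admissible M K \<and> (\<Sum>r\<in>{1..<M}. K r - 1) = n \<longleftrightarrow> kunz_low_genus M n K"
      using pos assms unfolding kunz_low_genus_def by blast
    then show ?thesis
      unfolding kunz_set_class_iff[OF \<open>0 < M\<close> pos] good_seq_map_upt_iff[OF \<open>0 < M\<close> assms]
      using kunz_low_genus.good_kunz_coords_iff kunz_low_genus_if_good_kunz_coords[OF assms]
      by blast
  qed
qed

lemma bij_betw_kunz_coords:
  assumes semigroup: "\<And>S. P S \<Longrightarrow> numerical_semigroup S \<and> multiplicity S = M"
    and seq_length: "\<And>xs. Q xs \<Longrightarrow> length xs = M - 1"
    and coords: "\<And>K. P (kunz_set M K) \<longleftrightarrow> Q (map K [1..<M])"
  shows "bij_betw (\<lambda>S. map (kunz_coord M S) [1..<M]) {S. P S} {xs. Q xs}"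
proof (rule bij_betw_byWitness[where f' = "\<lambda>xs. kunz_set M (\<lambda>r. xs ! (r - 1))"])
  have kunz_set_coords: "kunz_set M (kunz_coord M S) = S" if "P S" for S
    using kunz_set_kunz_coord multiplicity_mem semigroup[OF that] by auto
  show "\<forall>S\<in>{S. P S}. kunz_set M (\<lambda>r. map (kunz_coord M S) [1..<M] ! (r - 1)) = S"
  proof
    fix S assume "S \<in> {S. P S}"
    moreover have "0 < M" using semigroup multiplicity_mem(2) \<open>S \<in> {S. P S}\<close> by fastforce
    then have "kunz_set M (\<lambda>r. map (kunz_coord M S) [1..<M] ! (r - 1)) =
        kunz_set M (kunz_coord M S)"
      by (intro kunz_set_cong) auto
    ultimately show "kunz_set M (\<lambda>r. map (kunz_coord M S) [1..<M] ! (r - 1)) = S"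
      using kunz_set_coords by simp
  qed
  show "\<forall>xs\<in>{xs. Q xs}. map (kunz_coord M (kunz_set M (\<lambda>r. xs ! (r - 1)))) [1..<M] = xs"
  proof
    fix xs assume "xs \<in> {xs. Q xs}"
    have "map (kunz_coord M (kunz_set M (\<lambda>r. xs ! (r - 1)))) [1..<M] =
        map (\<lambda>r. xs ! (r - 1)) [1..<M]"
      by (rule map_cong) (auto simp: kunz_coord_kunz_set)
    also have "\<dots> = xs" by (rule map_nth_upt_pred) (use seq_length \<open>xs \<in> {xs. Q xs}\<close> in simp)
    finally show "map (kunz_coord M (kunz_set M (\<lambda>r. xs ! (r - 1)))) [1..<M] = xs" .
  qed
  show "(\<lambda>S. map (kunz_coord M S) [1..<M]) ` {S. P S} \<subseteq> {xs. Q xs}"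
    using coords kunz_set_coords by force
  show "(\<lambda>xs. kunz_set M (\<lambda>r. xs ! (r - 1))) ` {xs. Q xs} \<subseteq> {S. P S}"
    using coords seq_length map_nth_upt_pred by force
qed

theorem theorem8p5:
  fixes k1 k2 m :: int
  assumes "-1 \<le> k1" and "k1 \<le> k2" and "m \<ge> 2 * k1 + 2"
  shows "\<exists>f. bij_betw f
           {S. numerical_semigroup S \<and> int (multiplicity S) = m \<and> int (genus S) = m + k1
               \<and> int (embedding_dimension S) = int (genus S) - k2}
           {xs. good_seq k1 k2 m xs}"
proof -
  define M n where "M = nat m" and "n = nat (k1 + 1)"
  have m: "m = int M" and k1: "k1 = int n - 1" and "2 * n \<le> M"
    using assms by (auto simp: M_def n_def)
  let ?class = "\<lambda>S. numerical_semigroup S \<and> int (multiplicity S) = int M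
    \<and> int (genus S) = int M + (int n - 1) \<and> int (embedding_dimension S) = int (genus S) - k2"
  let ?good = "good_seq (int n - 1) k2 (int M)"
  have "bij_betw (\<lambda>S. map (kunz_coord M S) [1..<M]) {S. ?class S} {xs. ?good xs}"
  proof (rule bij_betw_kunz_coords)
    show "?class S \<Longrightarrow> numerical_semigroup S \<and> multiplicity S = M" for S by simp
    show "?good xs \<Longrightarrow> length xs = M - 1" for xs by (rule good_seq_length)
    show "?class (kunz_set M K) \<longleftrightarrow> ?good (map K [1..<M])" for K
      by (rule kunz_set_class_iff_good_seq[OF \<open>2 * n \<le> M\<close>])
  qed
  then show ?thesis unfolding m k1 by blast
qed

end
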